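(* Let $\{A(t);t\ge0\}$ be a non-homogeneous Poisson process on $[0,\infty)$ with rate function $\lambda$. For each $s\ge0$ let $B_s$ be a nonnegative random variable (law depending on $s$) and $F_s$ a CDF on $[0,\infty)$ with finite mean $\mathcal{E}_s[S_1(s)]$, where $S_1(s)$ has CDF $F_s$. For each integer $m\ge1$ consider the infinite-server queue, starting empty, in which batches arrive at the points of $A$, a batch arriving at time $s$ has size $\lceil mB_s\rceil$, and given its size the customers of that batch bring i.i.d. amounts of work with CDF $F_s$, batches being independent of each other and of $A$; a customer arriving at time $s$ with work $S$ departs at $s+S$. Let $W_m(t)$, $Q_m(t)$, $D_m(t)$ be the workload at time $t$, number of customers present at time $t$, and number of departures in $(0,t]$, and set $\overline{W}_m=W_m/m$, $\overline{Q}_m=Q_m/m$, $\overline{D}_m=D_m/m$. Then for each $t\ge0$ and all $\alpha,\beta,\gamma\ge0$, $$\lim_{m\to\infty}\mathbb{E}\big[e^{-\alpha\overline{W}_m(t)-\beta\overline{Q}_m(t)-\gamma\overline{D}_m(t)}\big]=\exp\Big(-\int_0^t\mathcal{E}_s\Big[1-e^{-B_s\left[\alpha\mathcal{E}_s[S_1(s)]\overline{F}^e_s(t-s)+\beta\overline{F}_s(t-s)+\gamma F_s(t-s)\right]}\Big]\lambda(s)\,ds\Big).$$ In particular, $$\lim_{m\to\infty}\mathbb{E}\big[e^{-\alpha\overline{W}_m(t)}\big]=\exp\Big(-\int_0^t\mathcal{E}_s\Big[1-e^{-B_s\alpha\mathcal{E}_s[S_1(s)]\overline{F}^e_s(t-s)}\Big]\lambda(s)\,ds\Big),$$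 so $\overline{W}_m(t)$ converges in distribution to the value at time $t$ of the shot-noise process $\int_0^tB_s\,\mathcal{E}_s[S_1(s)]\overline{F}^e_s(t-s)\,A(ds)$.
   Context: $\mathcal{E}_s$ denotes expectation with respect to the laws of $B_s$ and of the work amounts of a batch arriving at time $s$. $\overline{F}_s=1-F_s$. The workload $W_m(t)$ is the total remaining work $\sum(S-(t-s))^+$ over all customers arrived by time $t$. $\overline{F}^e_s$ is the tail of the stationary excess (equilibrium) distribution of $F_s$: $\overline{F}^e_s(u):=\frac{1}{\mathcal{E}_s[S_1(s)]}\int_u^\infty\overline{F}_s(v)\,dv$, so that $\mathcal{E}_s[S_1(s)]\overline{F}^e_s(u)=\mathcal{E}_s[(S_1(s)-u)^+]$. *)

theory Defs
  imports "HOL-Probability.Probability"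
begin

definition cum_rate :: "(real \<Rightarrow> real) \<Rightarrow> real \<Rightarrow> real" where
  "cum_rate lam t = (LINT s:{0..t}|lborel. lam s)"

text \<open>Number of points of the non-homogeneous Poisson process A in [0,t]:
  Poisson with mean cum_rate lam t (the degenerate Poisson(0) law is the point mass at 0).\<close>
definition num_arrivals :: "(real \<Rightarrow> real) \<Rightarrow> real \<Rightarrow> nat pmf" where
  "num_arrivals lam t =
     (if cum_rate lam t = 0 then return_pmf 0 else poisson_pmf (cum_rate lam t))"

text \<open>Law of a single arrival epoch of A in [0,t] (density lam/cum_rate on [0,t]);
  the value for cum_rate = 0 is irrelevant since then there are a.s. no arrivals.\<close>
definition arrival_time_dist :: "(real \<Rightarrow> real) \<Rightarrow> real \<Rightarrow> real measure" where
  "arrival_time_dist lam t =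
     (if cum_rate lam t = 0 then return borel 0
      else density lborel (\<lambda>s. ennreal (indicator {0..t} s * lam s / cum_rate lam t)))"

text \<open>Mark of a batch: (arrival epoch s, value b of B_s, i.i.d. work amounts S_1,S_2,... with law F_s).
  Only the first nat(ceiling(m b)) work amounts belong to the batch.\<close>
definition mark_space :: "(real \<times> real \<times> (nat \<Rightarrow> real)) measure" where
  "mark_space = borel \<Otimes>\<^sub>M (borel \<Otimes>\<^sub>M PiM UNIV (\<lambda>_::nat. borel))"

definition mark_dist ::
  "(real \<Rightarrow> real) \<Rightarrow> (real \<Rightarrow> real measure) \<Rightarrow> (real \<Rightarrow> real measure) \<Rightarrow> real
   \<Rightarrow> (real \<times> real \<times> (nat \<Rightarrow> real)) measure" where
  "mark_dist lam B Sd t =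
     arrival_time_dist lam t \<bind> (\<lambda>s. B s \<bind>
       (\<lambda>b. distr (PiM UNIV (\<lambda>_::nat. Sd s)) mark_space (\<lambda>S. (s, b, S))))"

text \<open>Sample space of the system up to time t: number N of batches arrived in [0,t] and
  an i.i.d. sequence of marks, independent of N (the first N of them are the batches).\<close>
definition queue_sample ::
  "(real \<Rightarrow> real) \<Rightarrow> (real \<Rightarrow> real measure) \<Rightarrow> (real \<Rightarrow> real measure) \<Rightarrow> real
   \<Rightarrow> (nat \<times> (nat \<Rightarrow> real \<times> real \<times> (nat \<Rightarrow> real))) measure" where
  "queue_sample lam B Sd t =
     measure_pmf (num_arrivals lam t) \<Otimes>\<^sub>M PiM UNIV (\<lambda>_::nat. mark_dist lam B Sd t)"

definition batch_size :: "nat \<Rightarrow> real \<Rightarrow> nat" where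
  "batch_size m b = nat \<lceil>real m * b\<rceil>"

definition workload :: "nat \<Rightarrow> real \<Rightarrow> nat \<times> (nat \<Rightarrow> real \<times> real \<times> (nat \<Rightarrow> real)) \<Rightarrow> real" where
  "workload m t \<omega> = (\<Sum>i<fst \<omega>. (case snd \<omega> i of (s, b, S) \<Rightarrow>
      \<Sum>j<batch_size m b. max 0 (S j - (t - s))))"

definition num_present :: "nat \<Rightarrow> real \<Rightarrow> nat \<times> (nat \<Rightarrow> real \<times> real \<times> (nat \<Rightarrow> real)) \<Rightarrow> real" where
  "num_present m t \<omega> = (\<Sum>i<fst \<omega>. (case snd \<omega> i of (s, b, S) \<Rightarrow>
      real (card {j. j < batch_size m b \<and> t < s + S j})))"

definition num_departed :: "nat \<Rightarrow> real \<Rightarrow> nat \<times> (nat \<Rightarrow> real \<times> real \<times> (nat \<Rightarrow> real)) \<Rightarrow> real" where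
  "num_departed m t \<omega> = (\<Sum>i<fst \<omega>. (case snd \<omega> i of (s, b, S) \<Rightarrow>
      real (card {j. j < batch_size m b \<and> 0 < s + S j \<and> s + S j \<le> t})))"

definition mean_work :: "(real \<Rightarrow> real measure) \<Rightarrow> real \<Rightarrow> real" where
  "mean_work Sd s = (\<integral>x. x \<partial>Sd s)"

definition Fbar :: "(real \<Rightarrow> real measure) \<Rightarrow> real \<Rightarrow> real \<Rightarrow> real" where
  "Fbar Sd s u = 1 - cdf (Sd s) u"

definition Fbar_e :: "(real \<Rightarrow> real measure) \<Rightarrow> real \<Rightarrow> real \<Rightarrow> real" where
  "Fbar_e Sd s u = (1 / mean_work Sd s) * (LINT v:{u..}|lborel. Fbar Sd s v)"

text \<open>Law of the shot-noise value int_0^t B_s E_s[S_1(s)] Fbar^e_s(t-s) A(ds), built from the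
  same Poisson construction of A on [0,t] with independent marks B_s.\<close>
definition shot_noise ::
  "(real \<Rightarrow> real) \<Rightarrow> (real \<Rightarrow> real measure) \<Rightarrow> (real \<Rightarrow> real measure) \<Rightarrow> real \<Rightarrow> real measure" where
  "shot_noise lam B Sd t = distr (queue_sample lam B Sd t) borel
     (\<lambda>\<omega>. \<Sum>i<fst \<omega>. (case snd \<omega> i of (s, b, S) \<Rightarrow>
        b * mean_work Sd s * Fbar_e Sd s (t - s)))"

end

theory Submission
  imports Defs
begin

text \<open>Conditionally on their number, the batches arriving in \<open>[0, t]\<close> carry i.i.d. marks
  \<open>(s, b, S)\<close>, so the expectation of a product of batch factors is the probability generating
  functional \<open>exp (\<integral>\<^sub>0\<^sup>t \<lambda>(s) (E g(s, \<cdot>) - 1) ds)\<close> of a marked Poisson process.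
  The Laplace transform of \<open>(\<alpha> W + \<beta> Q + \<gamma> D) / m\<close> and the characteristic function of
  \<open>W / m\<close> are of this form: a batch contributes the factor \<open>exp (z / m \<cdot> \<Sum>\<^sub>j f(s, S\<^sub>j))\<close>, the
  sum running over its \<open>\<lceil>m b\<rceil>\<close> customers, for a per-customer functional \<open>f \<ge> 0\<close> and
  \<open>Re z \<le> 0\<close>. Given \<open>b\<close>, its expectation is
  \<open>\<phi>\<^sub>m(s)\<^bsup>\<lceil>m b\<rceil>\<^esup>\<close> with \<open>\<phi>\<^sub>m(s) = E exp (z f(s, S) / m)\<close>; since \<open>m (\<phi>\<^sub>m(s) - 1) \<rightarrow> z E f(s, S)\<close>,
  this power tends to \<open>exp (b z E f(s, S))\<close>, and dominated convergence (twice) gives the limit.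
  The expectations \<open>E f(s, S)\<close> are computed with \<open>E (S - u)\<^sup>+ = \<integral>\<^sub>u\<^sup>\<infinity> (1 - F)\<close>. For \<open>z\<close>
  imaginary the limit is the characteristic function of the shot-noise variable, and Levy's
  continuity theorem yields weak convergence.\<close>

section \<open>Powers of integrals close to one\<close>

lemma norm_exp_minus_one_le:
  fixes w :: complex
  assumes "Re w \<le> 0"
  shows "cmod (exp w - 1) \<le> cmod w"
proof -
  have "cmod (exp w - exp 0) \<le> 1 * cmod (w - 0)"
  proof (rule field_differentiable_bound[OF convex_halfspace_Re_le[of 0]])
    show "(exp has_field_derivative exp z) (at z within {z. Re z \<le> 0})" for z
      by (rule DERIV_subset[OF DERIV_exp]) simp
  qed (use assms in auto)
  then show ?thesis by simp
qed

lemma norm_exp_mult_of_real_divide_le_1: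
  fixes z :: complex
  assumes "Re z \<le> 0" "0 \<le> y"
  shows "cmod (exp (z * of_real y / of_nat m)) \<le> 1"
proof -
  have "Re (z * of_real y / of_nat m) = Re z * y / real m" by (simp add: Re_divide_of_nat)
  also have "\<dots> \<le> 0" using assms by (simp add: divide_nonpos_nonneg mult_nonpos_nonneg)
  finally show ?thesis by simp
qed

lemma (in prob_space) norm_integral_le_const:
  fixes g :: "'a \<Rightarrow> 'b::{banach,second_countable_topology}"
  assumes "g \<in> borel_measurable M" "AE x in M. norm (g x) \<le> C"
  shows "norm (integral\<^sup>L M g) \<le> C"
proof -
  have "norm (integral\<^sup>L M g) \<le> (\<integral>x. norm (g x) \<partial>M)" by (rule integral_norm_bound)
  also have "\<dots> \<le> (\<integral>x. C \<partial>M)"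
  proof (rule integral_mono_AE)
    show "integrable M (\<lambda>x. norm (g x))"
      using assms by (intro integrable_const_bound[where B=C]) auto
  qed (use assms in auto)
  finally show ?thesis by (simp add: prob_space)
qed

lemma tendsto_of_nat_mult_exp_minus_one:
  fixes w :: "nat \<Rightarrow> complex"
  assumes lim: "(\<lambda>m. of_nat m * w m) \<longlonglongrightarrow> L"
  shows "(\<lambda>m. of_nat m * (exp (w m) - 1)) \<longlonglongrightarrow> L"
proof -
  define q where "q v = (if v = 0 then 1 else (exp v - 1) / v)" for v :: complex
  have "((\<lambda>v. (exp v - exp 0) / (v - 0)) \<longlongrightarrow> exp (0::complex)) (at 0)"
    using DERIV_exp[of "0::complex"] by (simp add: has_field_derivative_iff)
  moreover have "\<forall>\<^sub>F v in at 0. (exp v - exp 0) / (v - 0) = q v"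
    by (simp add: q_def eventually_at_filter)
  ultimately have "(q \<longlongrightarrow> exp 0) (at 0)"
    by (rule Lim_transform_eventually)
  then have "(q \<longlongrightarrow> q 0) (at 0)"
    by (simp add: q_def)
  then have q_cont: "isCont q 0" by (simp add: isCont_def)
  have "(\<lambda>m. (of_nat m * w m) * of_real (inverse (real m))) \<longlonglongrightarrow> L * of_real 0"
    by (intro tendsto_mult lim tendsto_of_real lim_inverse_n)
  moreover have "\<forall>\<^sub>F m in sequentially. (of_nat m * w m) * of_real (inverse (real m)) = w m"
    using eventually_gt_at_top[of "0::nat"] by eventually_elim (simp add: field_simps)
  ultimately have "(\<lambda>m. w m) \<longlonglongrightarrow> L * of_real 0"
    by (rule Lim_transform_eventually)
  then have "w \<longlonglongrightarrow> 0"
    by simp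
  then have "(\<lambda>m. (of_nat m * w m) * q (w m)) \<longlonglongrightarrow> L * q 0"
    by (intro tendsto_mult lim isCont_tendsto_compose[OF q_cont])
  moreover have "(\<lambda>m. (of_nat m * w m) * q (w m)) = (\<lambda>m. of_nat m * (exp (w m) - 1))"
    by (simp add: q_def fun_eq_iff)
  ultimately show ?thesis by (simp add: q_def)
qed

lemma norm_power_minus_exp_power_le:
  fixes z :: complex
  assumes "cmod z \<le> 1"
  shows "cmod (z ^ n - exp (z - 1) ^ n) \<le> real n * cmod (exp (z - 1) - z)"
proof -
  have "cmod (exp (z - 1)) \<le> 1"
    using assms abs_Re_le_cmod[of z] by simp
  from norm_power_diff[OF assms this] show ?thesis
    by (simp add: norm_minus_commute)
qed

text \<open>Compare \<open>z m ^ n m\<close> with \<open>exp (z m - 1) ^ n m\<close>: both bases lie in the unit disc and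
  differ by \<open>o(1/m)\<close>, while \<open>n m = O(m)\<close>.\<close>
lemma tendsto_power_exp:
  fixes z :: "nat \<Rightarrow> complex" and n :: "nat \<Rightarrow> nat"
  assumes z_le_1: "\<And>m. cmod (z m) \<le> 1"
    and z_lim: "(\<lambda>m. of_nat m * (z m - 1)) \<longlonglongrightarrow> L"
    and n_lim: "(\<lambda>m. real (n m) / real m) \<longlonglongrightarrow> b"
  shows "(\<lambda>m. z m ^ n m) \<longlonglongrightarrow> exp (of_real b * L)"
proof -
  define w where "w m = z m - 1" for m
  have exp_w_lim: "(\<lambda>m. of_nat m * (exp (w m) - 1)) \<longlonglongrightarrow> L"
    unfolding w_def by (rule tendsto_of_nat_mult_exp_minus_one[OF z_lim])
  have "(\<lambda>m. exp (of_real (real (n m) / real m) * (of_nat m * w m))) \<longlonglongrightarrow> exp (of_real b * L)"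
    unfolding w_def by (intro tendsto_exp tendsto_mult tendsto_of_real n_lim z_lim)
  moreover have "\<forall>\<^sub>F m in sequentially.
      exp (of_real (real (n m) / real m) * (of_nat m * w m)) = exp (w m) ^ n m"
    using eventually_gt_at_top[of "0::nat"]
    by eventually_elim (simp add: exp_of_nat_mult[symmetric] field_simps)
  ultimately have exp_pow_lim: "(\<lambda>m. exp (w m) ^ n m) \<longlonglongrightarrow> exp (of_real b * L)"
    by (rule Lim_transform_eventually)
  have "(\<lambda>m. (real (n m) / real m) * cmod (of_nat m * (exp (w m) - 1) - of_nat m * w m))
          \<longlonglongrightarrow> b * cmod (L - L)"
    unfolding w_def by (intro tendsto_mult n_lim tendsto_norm tendsto_diff exp_w_lim[unfolded w_def] z_lim)
  then have err_lim: "(\<lambda>m. (real (n m) / real m) * cmod (of_nat m * (exp (w m) - 1) - of_nat m * w m))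
          \<longlonglongrightarrow> 0"
    by simp
  have err_bound: "norm (z m ^ n m - exp (w m) ^ n m)
          \<le> (real (n m) / real m) * cmod (of_nat m * (exp (w m) - 1) - of_nat m * w m)"
    if "0 < m" for m
  proof -
    have "of_nat m * (exp (w m) - 1) - of_nat m * w m = of_nat m * (exp (w m) - z m)"
      by (simp add: w_def algebra_simps)
    then show ?thesis
      using norm_power_minus_exp_power_le[OF z_le_1, of m "n m"] that by (simp add: w_def norm_mult)
  qed
  have "(\<lambda>m. z m ^ n m - exp (w m) ^ n m) \<longlonglongrightarrow> 0"
    by (rule Lim_null_comparison[OF eventually_mono[OF eventually_gt_at_top err_bound] err_lim])
  from tendsto_add[OF this exp_pow_lim] show ?thesis by simp
qed

lemma tendsto_nat_ceiling_mult_divide: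
  fixes b :: real
  assumes "0 \<le> b"
  shows "(\<lambda>m::nat. real (nat \<lceil>real m * b\<rceil>) / real m) \<longlonglongrightarrow> b"
proof (rule tendsto_sandwich[OF _ _ tendsto_const])
  have bounds: "b \<le> real (nat \<lceil>real m * b\<rceil>) / real m \<and> real (nat \<lceil>real m * b\<rceil>) / real m \<le> b + inverse (real m)"
    if "0 < m" for m :: nat
  proof -
    have "real m * b \<le> real (nat \<lceil>real m * b\<rceil>)" "real (nat \<lceil>real m * b\<rceil>) \<le> real m * b + 1"
      using assms ceiling_correct[of "real m * b"] by (auto simp: of_nat_nat)
    then show ?thesis
      using that by (simp add: field_simps)
  qed
  show "\<forall>\<^sub>F m in sequentially. b \<le> real (nat \<lceil>real m * b\<rceil>) / real m"
    and "\<forall>\<^sub>F m in sequentially. real (nat \<lceil>real m * b\<rceil>) / real m \<le> b + inverse (real m)"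
    by (rule eventually_mono[OF eventually_gt_at_top[of 0]], use bounds in blast)+
  show "(\<lambda>m. b + inverse (real m)) \<longlonglongrightarrow> b"
    using tendsto_add[OF tendsto_const lim_inverse_n, of b] by simp
qed

lemma tendsto_of_nat_mult_exp_divide_minus_one:
  fixes c :: complex
  shows "(\<lambda>m. of_nat m * (exp (c / of_nat m) - 1)) \<longlonglongrightarrow> c"
proof (rule tendsto_of_nat_mult_exp_minus_one)
  have "\<forall>\<^sub>F m in sequentially. c = of_nat m * (c / of_nat m)"
    using eventually_gt_at_top[of "0::nat"] by eventually_elim simp
  then show "(\<lambda>m. of_nat m * (c / of_nat m)) \<longlonglongrightarrow> c"
    by (rule Lim_transform_eventually[OF tendsto_const])
qed

lemma norm_of_nat_mult_exp_minus_one_le: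
  fixes z :: complex
  assumes z: "Re z \<le> 0" and y: "0 \<le> y"
  shows "cmod (of_nat m * (exp (z * of_real y / of_nat m) - 1)) \<le> cmod z * y"
proof -
  have "cmod (exp (z * of_real y / of_nat m) - 1) \<le> cmod (z * of_real y / of_nat m)"
    by (rule norm_exp_minus_one_le)
       (use z y in \<open>simp add: Re_divide_of_nat mult_nonpos_nonneg divide_nonpos_nonneg\<close>)
  then have "real m * cmod (exp (z * of_real y / of_nat m) - 1) \<le> real m * cmod (z * of_real y / of_nat m)"
    by (rule mult_left_mono) simp
  also have "\<dots> \<le> cmod z * y"
    using y by (cases "m = 0") (simp_all add: norm_mult norm_divide)
  finally show ?thesis by (simp add: norm_mult)
qed

lemma tendsto_of_nat_mult_integral_exp_minus_one:
  fixes z :: complex and f :: "'a \<Rightarrow> real"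
  assumes M: "prob_space M" and f_int: "integrable M f" and f_nonneg: "AE x in M. 0 \<le> f x"
    and z: "Re z \<le> 0"
  shows "(\<lambda>m::nat. of_nat m * ((\<integral>x. exp (z * of_real (f x) / of_nat m) \<partial>M) - 1))
           \<longlonglongrightarrow> z * of_real (\<integral>x. f x \<partial>M)"
proof -
  interpret prob_space M by fact
  have [measurable]: "f \<in> borel_measurable M" using f_int by auto
  have "integrable M (\<lambda>x. exp (z * of_real (f x) / of_nat m))" for m :: nat
    using f_nonneg norm_exp_mult_of_real_divide_le_1[OF z]
    by (intro integrable_const_bound[where B=1]) (auto elim: eventually_mono)
  then have integral_eq: "(\<integral>x. exp (z * of_real (f x) / of_nat m) - 1 \<partial>M)
      = (\<integral>x. exp (z * of_real (f x) / of_nat m) \<partial>M) - 1" for m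
    by (simp add: prob_space)
  have "(\<lambda>m. \<integral>x. of_nat m * (exp (z * of_real (f x) / of_nat m) - 1) \<partial>M)
      \<longlonglongrightarrow> (\<integral>x. z * of_real (f x) \<partial>M)"
    using f_nonneg f_int tendsto_of_nat_mult_exp_divide_minus_one norm_of_nat_mult_exp_minus_one_le[OF z]
    by (intro integral_dominated_convergence[where w="\<lambda>x. cmod z * f x"]) (auto elim!: eventually_mono)
  then show ?thesis by (simp add: integral_eq)
qed

lemma tendsto_integral_exp_power_nat_ceiling:
  fixes z :: complex and f :: "'a \<Rightarrow> real"
  assumes M: "prob_space M" and f_int: "integrable M f" and f_nonneg: "AE x in M. 0 \<le> f x"
    and z: "Re z \<le> 0" and b: "0 \<le> b"
  shows "(\<lambda>m::nat. (\<integral>x. exp (z * of_real (f x) / of_nat m) \<partial>M) ^ nat \<lceil>real m * b\<rceil>)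
           \<longlonglongrightarrow> exp (of_real b * (z * of_real (\<integral>x. f x \<partial>M)))"
proof (rule tendsto_power_exp[OF _ tendsto_of_nat_mult_integral_exp_minus_one[OF assms(1-4)]
      tendsto_nat_ceiling_mult_divide[OF b]])
  interpret prob_space M by fact
  show "cmod (\<integral>x. exp (z * of_real (f x) / of_nat m) \<partial>M) \<le> 1" for m
    using f_int f_nonneg norm_exp_mult_of_real_divide_le_1[OF z]
    by (intro norm_integral_le_const) (auto elim: eventually_mono)
qed

section \<open>Kernels, products and the Poisson distribution\<close>

lemma measurable_PiM_iid_kernel:
  assumes K: "K \<in> N \<rightarrow>\<^sub>M prob_algebra M"
  shows "(\<lambda>s. PiM I (\<lambda>_. K s)) \<in> N \<rightarrow>\<^sub>M prob_algebra (PiM I (\<lambda>_. M))"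
proof (rule measurable_prob_algebra_generated[OF sets_PiM Int_stable_prod_algebra prod_algebra_sets_into_space])
  fix s assume "s \<in> space N"
  then have K_s: "prob_space (K s)" "sets (K s) = sets M"
    using measurable_space[OF K] by (auto simp: space_prob_algebra)
  then show "prob_space (PiM I (\<lambda>_. K s))" by (intro prob_space_PiM) auto
  show "sets (PiM I (\<lambda>_. K s)) = sets (PiM I (\<lambda>_. M))"
    using K_s by (intro sets_PiM_cong) auto
next
  fix A assume "A \<in> prod_algebra I (\<lambda>_. M)"
  then obtain J E where A: "A = prod_emb I (\<lambda>_. M) J (Pi\<^sub>E J E)" "finite J" "J \<subseteq> I"
      "\<And>i. i \<in> J \<Longrightarrow> E i \<in> sets M"
    by (auto elim!: prod_algebraE)
  have "emeasure (PiM I (\<lambda>_. K s)) A = (\<Prod>j\<in>J. emeasure (K s) (E j))" if "s \<in> space N" for s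
  proof -
    have K_s: "prob_space (K s)" "sets (K s) = sets M"
      using measurable_space[OF K that] by (auto simp: space_prob_algebra)
    then have "A = prod_emb I (\<lambda>_. K s) J (Pi\<^sub>E J E)"
      using A(1) sets_eq_imp_space_eq[OF K_s(2)] by (simp add: prod_emb_def)
    then show ?thesis
      using K_s A by (simp add: emeasure_PiM_emb)
  qed
  moreover have "(\<lambda>s. \<Prod>j\<in>J. emeasure (K s) (E j)) \<in> borel_measurable N"
    using A K by (intro borel_measurable_prod_ennreal measurable_emeasure_kernel[OF measurable_prob_algebraD]) auto
  ultimately show "(\<lambda>s. emeasure (PiM I (\<lambda>_. K s)) A) \<in> borel_measurable N"
    by (simp cong: measurable_cong)
qed

lemma integral_PiM_prod_power:
  fixes h :: "'a \<Rightarrow> 'b::{real_normed_field,second_countable_topology,banach}"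
  assumes M: "prob_space M" and h: "integrable M h"
  shows "(\<integral>x. (\<Prod>i<n. h (x i)) \<partial>PiM (UNIV::nat set) (\<lambda>_. M)) = (integral\<^sup>L M h) ^ n"
proof -
  interpret product_prob_space "\<lambda>_. M" "UNIV :: nat set"
    using M by (simp add: product_prob_space_def product_prob_space_axioms_def product_sigma_finite_def
        prob_space_imp_sigma_finite)
  have [measurable]: "h \<in> borel_measurable M" using h by auto
  have "(\<integral>x. (\<Prod>i<n. h (x i)) \<partial>PiM UNIV (\<lambda>_. M)) =
        (\<integral>x. (\<Prod>i<n. h (x i)) \<partial>distr (PiM UNIV (\<lambda>_. M)) (PiM {..<n} (\<lambda>_. M)) (\<lambda>x. restrict x {..<n}))"
    by (subst integral_distr) (auto intro!: integral_cong measurable_restrict_subset)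
  also have "\<dots> = (\<integral>x. (\<Prod>i<n. h (x i)) \<partial>PiM {..<n} (\<lambda>_. M))"
    by (subst distr_PiM_restrict_finite) auto
  also have "\<dots> = (\<Prod>i<n. integral\<^sup>L M h)"
    using h by (subst product_integral_prod) auto
  finally show ?thesis by simp
qed

lemma prob_space_bounded_integrable:
  fixes f :: "_ \<Rightarrow> 'b::{banach,second_countable_topology}"
  assumes L: "prob_space L" "sets L = sets K"
    and f: "f \<in> borel_measurable K" and f_bound: "\<And>x. x \<in> space K \<Longrightarrow> norm (f x) \<le> C"
  shows "integrable L f" and "norm (integral\<^sup>L L f) \<le> C"
proof -
  interpret L: prob_space L by fact
  have "f \<in> borel_measurable L" "AE x in L. norm (f x) \<le> C"
    using L(2) f f_bound sets_eq_imp_space_eq[OF L(2)] by (auto cong: measurable_cong_sets)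
  then show "integrable L f" and "norm (integral\<^sup>L L f) \<le> C"
    by (auto intro: L.integrable_const_bound L.norm_integral_le_const)
qed

lemma integral_bind_complex:
  fixes f :: "_ \<Rightarrow> complex"
  assumes f[measurable]: "f \<in> borel_measurable K"
    and f_bound: "\<And>x. x \<in> space K \<Longrightarrow> cmod (f x) \<le> C"
    and N[measurable]: "N \<in> M \<rightarrow>\<^sub>M prob_algebra K"
    and M: "prob_space M"
  shows "integral\<^sup>L (M \<bind> N) f = (\<integral>x. integral\<^sup>L (N x) f \<partial>M)"
proof -
  interpret prob_space M by fact
  have N_sub: "N \<in> M \<rightarrow>\<^sub>M subprob_algebra K" using N by (rule measurable_prob_algebraD)
  have N_le_1: "AE x in M. emeasure (N x) (space (N x)) \<le> ennreal 1"
    using measurable_space[OF N] by (auto simp: space_prob_algebra prob_space.emeasure_space_1)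
  have N_x: "prob_space (N x)" "sets (N x) = sets K" if "x \<in> space M" for x
    using measurable_space[OF N that] by (auto simp: space_prob_algebra)
  note bounded = prob_space_bounded_integrable[OF _ _ f f_bound]
  have int_bind: "integrable (M \<bind> N) f"
    using prob_space_bind'[of M M N K] sets_bind'[of M M N K] N M
    by (intro bounded) (auto simp: space_prob_algebra)
  have int_outer: "integrable M (\<lambda>x. integral\<^sup>L (N x) f)"
    using bounded(2)[OF N_x] measurable_compose[OF N_sub integral_measurable_subprob_algebra[OF f]]
    by (intro integrable_const_bound[where B=C]) auto
  have Re_bound: "\<bar>Re (f x)\<bar> \<le> C" and Im_bound: "\<bar>Im (f x)\<bar> \<le> C" if "x \<in> space K" for x
    using f_bound[OF that] abs_Re_le_cmod[of "f x"] abs_Im_le_cmod[of "f x"] by linarith+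
  have "Re (integral\<^sup>L (M \<bind> N) f) = integral\<^sup>L (M \<bind> N) (\<lambda>x. Re (f x))"
    using int_bind by simp
  also have "\<dots> = (\<integral>x. integral\<^sup>L (N x) (\<lambda>y. Re (f y)) \<partial>M)"
    by (rule integral_bind[OF _ Re_bound N_sub finite_measure_axioms N_le_1]) simp
  also have "\<dots> = Re (\<integral>x. integral\<^sup>L (N x) f \<partial>M)"
    using int_outer bounded(1)[OF N_x] by (simp cong: Bochner_Integration.integral_cong)
  finally have "Re (integral\<^sup>L (M \<bind> N) f) = Re (\<integral>x. integral\<^sup>L (N x) f \<partial>M)" .
  moreover have "Im (integral\<^sup>L (M \<bind> N) f) = integral\<^sup>L (M \<bind> N) (\<lambda>x. Im (f x))"
    using int_bind by simp
  moreover have "\<dots> = (\<integral>x. integral\<^sup>L (N x) (\<lambda>y. Im (f y)) \<partial>M)"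
    by (rule integral_bind[OF _ Im_bound N_sub finite_measure_axioms N_le_1]) simp
  moreover have "\<dots> = Im (\<integral>x. integral\<^sup>L (N x) f \<partial>M)"
    using int_outer bounded(1)[OF N_x] by (simp cong: Bochner_Integration.integral_cong)
  ultimately show ?thesis by (simp add: complex_eq_iff)
qed
lemma integral_poisson_pmf_power:
  fixes z :: complex
  assumes L: "0 < L"
  shows "(\<integral>n. z ^ n \<partial>measure_pmf (poisson_pmf L)) = exp (of_real L * (z - 1))"
proof -
  define a where "a n = of_real (exp (- L)) * ((of_real L * z) ^ n /\<^sub>R fact n)" for n
  have "(\<integral>n. z ^ n \<partial>measure_pmf (poisson_pmf L)) = (\<integral>n. pmf (poisson_pmf L) n *\<^sub>R z ^ n \<partial>count_space UNIV)"
    unfolding measure_pmf_eq_density by (subst integral_density) auto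
  also have "\<dots> = (\<integral>n. a n \<partial>count_space UNIV)"
    using L by (intro Bochner_Integration.integral_cong refl)
      (simp add: a_def scaleR_conv_of_real power_mult_distrib field_simps)
  also have "\<dots> = of_real (exp (- L)) * exp (of_real L * z)"
  proof -
    have "a sums (of_real (exp (- L)) * exp (of_real L * z))"
      unfolding a_def by (intro sums_mult exp_converges)
    moreover have "integrable (count_space UNIV) a"
      unfolding integrable_count_space_nat_iff a_def norm_mult
      by (intro summable_mult summable_norm_exp)
    ultimately show ?thesis
      using sums_unique integral_count_space_nat by metis
  qed
  also have "\<dots> = exp (of_real L * (z - 1))"
    by (simp add: exp_of_real[symmetric] exp_add[symmetric] algebra_simps)
  finally show ?thesis .
qed

text \<open>Fubini applied to \<open>max 0 (x - u) = \<integral>\<^sub>u\<^sup>\<infinity> [v < x] dv\<close>. No integrability is needed: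
  otherwise both sides are \<open>0\<close> by convention.\<close>
lemma (in real_distribution) nn_integral_max_0_minus_eq_tail:
  "(\<integral>\<^sup>+x. ennreal (max 0 (x - u)) \<partial>M) = (\<integral>\<^sup>+v. ennreal (indicator {u..} v * (1 - cdf M v)) \<partial>lborel)"
proof -
  interpret pair_sigma_finite M lborel
    by (simp add: pair_sigma_finite_def prob_space_imp_sigma_finite prob_space_axioms
        lborel.sigma_finite_measure_axioms)
  have "(\<lambda>(x, v). indicator {u..<x} v :: ennreal) = indicator {p. u \<le> snd p \<and> snd p < fst p}"
    by (auto simp: indicator_def fun_eq_iff)
  moreover have "{p \<in> space (borel \<Otimes>\<^sub>M borel). u \<le> snd p \<and> snd p < fst p} \<in> sets (borel \<Otimes>\<^sub>M (borel::real measure))"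
    by measurable
  moreover have "sets (M \<Otimes>\<^sub>M lborel) = sets (borel \<Otimes>\<^sub>M (borel::real measure))"
    by (rule sets_pair_measure_cong) simp_all
  ultimately have ind_meas: "(\<lambda>(x, v). indicator {u..<x} v :: ennreal) \<in> borel_measurable (M \<Otimes>\<^sub>M lborel)"
    by (auto intro!: borel_measurable_indicator simp: space_pair_measure cong: measurable_cong_sets)
  have tail_eq: "(\<integral>\<^sup>+x. indicator {u..<x} v \<partial>M) = ennreal (indicator {u..} v * (1 - cdf M v))" for v
  proof -
    have "(\<integral>\<^sup>+x. indicator {u..<x} v \<partial>M) = (\<integral>\<^sup>+x. indicator {u..} v * indicator {v<..} x \<partial>M)"
      by (intro nn_integral_cong) (auto simp: indicator_def)
    also have "\<dots> = indicator {u..} v * emeasure M {v<..}"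
      by (subst nn_integral_cmult_indicator) auto
    also have "emeasure M {v<..} = ennreal (1 - cdf M v)"
      using prob_compl[of "{..v}"] borel_UNIV
      by (simp add: emeasure_eq_measure cdf_def2 Compl_eq_Diff_UNIV[symmetric] Compl_atMost)
    finally show ?thesis by (simp add: indicator_def)
  qed
  have "(\<integral>\<^sup>+x. ennreal (max 0 (x - u)) \<partial>M) = (\<integral>\<^sup>+x. (\<integral>\<^sup>+v. indicator {u..<x} v \<partial>lborel) \<partial>M)"
    by (intro nn_integral_cong) (simp add: max_def)
  also have "\<dots> = (\<integral>\<^sup>+v. (\<integral>\<^sup>+x. indicator {u..<x} v \<partial>M) \<partial>lborel)"
    using Fubini'[OF ind_meas] by simp
  finally show ?thesis by (simp add: tail_eq)
qed

lemma (in real_distribution) integral_max_0_minus_eq_tail: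
  "(\<integral>x. max 0 (x - u) \<partial>M) = (LINT v:{u..}|lborel. 1 - cdf M v)"
proof -
  have "(\<lambda>v. indicator {u..} v * (1 - cdf M v)) \<in> borel_measurable lborel"
    using borel_measurable_mono[OF monoI[OF cdf_nondecreasing]] by measurable
  moreover have "0 \<le> indicator {u..} v * (1 - cdf M v)" for v
    using cdf_bounded_prob[of v] by (simp add: indicator_def)
  ultimately have "(\<integral>v. indicator {u..} v * (1 - cdf M v) \<partial>lborel)
      = enn2real (\<integral>\<^sup>+v. ennreal (indicator {u..} v * (1 - cdf M v)) \<partial>lborel)"
    by (simp add: integral_eq_nn_integral)
  also have "\<dots> = enn2real (\<integral>\<^sup>+x. ennreal (max 0 (x - u)) \<partial>M)"
    by (simp only: nn_integral_max_0_minus_eq_tail)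
  also have "\<dots> = (\<integral>x. max 0 (x - u) \<partial>M)"
    by (rule integral_eq_nn_integral[symmetric]) auto
  finally show ?thesis
    by (simp add: set_lebesgue_integral_def)
qed

section \<open>The marked Poisson process of batches\<close>

definition batch_sum :: "(real \<Rightarrow> real \<Rightarrow> real) \<Rightarrow> nat \<Rightarrow> real \<times> real \<times> (nat \<Rightarrow> real) \<Rightarrow> real" where
  "batch_sum f m = (\<lambda>(s, b, S). \<Sum>j<batch_size m b. f s (S j))"

lemma batch_size_measurable[measurable]: "(\<lambda>b. batch_size m b) \<in> borel \<rightarrow>\<^sub>M count_space UNIV"
proof -
  have "(\<lambda>b. \<lceil>real m * b\<rceil>) \<in> borel \<rightarrow>\<^sub>M count_space UNIV"
    by (rule measurable_compose[OF _ measurable_real_ceiling]) simp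
  then show ?thesis
    unfolding batch_size_def by (rule measurable_compose) simp
qed

lemma batch_sum_measurable:
  assumes f_meas: "(\<lambda>(s, x). f s x) \<in> borel_measurable (borel \<Otimes>\<^sub>M borel)"
  shows "batch_sum f m \<in> borel_measurable mark_space"
proof -
  have f_j[measurable]: "(\<lambda>x. f (fst x) (snd (snd x) j)) \<in> borel_measurable mark_space" for j
  proof -
    have "(\<lambda>x::real \<times> real \<times> (nat \<Rightarrow> real). (fst x, snd (snd x) j)) \<in> mark_space \<rightarrow>\<^sub>M borel \<Otimes>\<^sub>M borel"
      unfolding mark_space_def by measurable
    from measurable_compose[OF this f_meas] show ?thesis by simp
  qed
  have "(\<lambda>x. (\<lambda>n x. \<Sum>j<n. f (fst x) (snd (snd x) j)) (batch_size m (fst (snd x))) x)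
      \<in> borel_measurable mark_space"
  proof (rule measurable_compose_countable'[where I=UNIV and g="\<lambda>x. batch_size m (fst (snd x))"])
    show "(\<lambda>x. batch_size m (fst (snd x))) \<in> mark_space \<rightarrow>\<^sub>M count_space UNIV"
      unfolding mark_space_def by measurable
  qed (use f_j in auto)
  then show ?thesis
    by (simp add: batch_sum_def case_prod_beta')
qed

lemma batch_sum_nonneg: "(\<And>s x. 0 \<le> f s x) \<Longrightarrow> 0 \<le> batch_sum f m x"
  by (cases x) (auto simp: batch_sum_def intro: sum_nonneg)

locale batch_queue =
  fixes lam :: "real \<Rightarrow> real" and B Sd :: "real \<Rightarrow> real measure" and t :: real
  assumes lam_nonneg: "\<And>s. 0 \<le> s \<Longrightarrow> 0 \<le> lam s"
    and lam_meas[measurable]: "lam \<in> borel_measurable borel"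
    and lam_int: "\<And>u. 0 \<le> u \<Longrightarrow> set_integrable lborel {0..u} lam"
    and B_kernel[measurable]: "B \<in> borel \<rightarrow>\<^sub>M prob_algebra borel"
    and B_nonneg: "\<And>s. 0 \<le> s \<Longrightarrow> AE b in B s. 0 \<le> b"
    and Sd_kernel[measurable]: "Sd \<in> borel \<rightarrow>\<^sub>M prob_algebra borel"
    and Sd_nonneg: "\<And>s. 0 \<le> s \<Longrightarrow> AE x in Sd s. 0 \<le> x"
    and Sd_mean: "\<And>s. 0 \<le> s \<Longrightarrow> integrable (Sd s) (\<lambda>x. x)"
    and t: "0 \<le> t"
begin

lemma rate_integrable: "integrable lborel (\<lambda>s. indicator {0..t} s * lam s)"
  using lam_int[OF t] by (simp add: set_integrable_def)

lemma rate_nonneg: "0 \<le> indicator {0..t} s * lam s"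
  using lam_nonneg[of s] by (auto simp: indicator_def)

lemma cum_rate_eq_integral: "cum_rate lam t = (\<integral>s. indicator {0..t} s * lam s \<partial>lborel)"
  by (simp add: cum_rate_def set_lebesgue_integral_def)

lemma cum_rate_nonneg: "0 \<le> cum_rate lam t"
  unfolding cum_rate_eq_integral by (intro integral_nonneg_AE) (simp add: rate_nonneg)

lemma B_prob: "prob_space (B s)" and B_sets[measurable_cong]: "sets (B s) = sets borel"
  using measurable_space[OF B_kernel, of s] by (auto simp: space_prob_algebra)

lemma Sd_prob: "prob_space (Sd s)" and Sd_sets[measurable_cong]: "sets (Sd s) = sets borel"
  using measurable_space[OF Sd_kernel, of s] by (auto simp: space_prob_algebra)

lemma arrival_time_dist_prob: "arrival_time_dist lam t \<in> space (prob_algebra borel)"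
proof (cases "cum_rate lam t = 0")
  case True
  then show ?thesis by (simp add: arrival_time_dist_def space_prob_algebra prob_space_return)
next
  case False
  then have pos: "0 < cum_rate lam t" using cum_rate_nonneg by simp
  let ?D = "density lborel (\<lambda>s. ennreal (indicator {0..t} s * lam s / cum_rate lam t))"
  have "emeasure ?D (space ?D) = (\<integral>\<^sup>+s. ennreal (indicator {0..t} s * lam s / cum_rate lam t) \<partial>lborel)"
    by (simp add: emeasure_density)
  also have "\<dots> = ennreal (\<integral>s. indicator {0..t} s * lam s / cum_rate lam t \<partial>lborel)"
    using rate_integrable rate_nonneg pos by (intro nn_integral_eq_integral) auto
  also have "(\<integral>s. indicator {0..t} s * lam s / cum_rate lam t \<partial>lborel) = 1"
    using pos by (simp add: cum_rate_eq_integral[symmetric])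
  finally have "prob_space ?D" by (intro prob_spaceI) simp
  then show ?thesis using False by (simp add: arrival_time_dist_def space_prob_algebra)
qed

lemma arrival_time_dist_prob_space: "prob_space (arrival_time_dist lam t)"
  and arrival_time_dist_sets: "sets (arrival_time_dist lam t) = sets borel"
  using arrival_time_dist_prob by (auto simp: space_prob_algebra)

lemma cum_rate_mult_integral_arrival_time_dist:
  fixes H :: "real \<Rightarrow> complex"
  assumes [measurable]: "H \<in> borel_measurable borel"
  shows "of_real (cum_rate lam t) * (\<integral>s. H s \<partial>arrival_time_dist lam t)
    = (\<integral>s. of_real (indicator {0..t} s * lam s) * H s \<partial>lborel)"
proof (cases "cum_rate lam t = 0")
  case True
  have "AE s in lborel. indicator {0..t} s * lam s = 0"
    using rate_integrable rate_nonneg True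
    by (subst integral_nonneg_eq_0_iff_AE[symmetric]) (auto simp: cum_rate_eq_integral)
  then have "(\<integral>s. of_real (indicator {0..t} s * lam s) * H s \<partial>lborel) = 0"
    by (intro integral_eq_zero_AE) (auto elim: eventually_mono)
  then show ?thesis using True by simp
next
  case False
  then have pos: "0 < cum_rate lam t" using cum_rate_nonneg by simp
  have "(\<integral>s. H s \<partial>arrival_time_dist lam t)
      = (\<integral>s. (indicator {0..t} s * lam s / cum_rate lam t) *\<^sub>R H s \<partial>lborel)"
    using False unfolding arrival_time_dist_def
    by (simp, subst integral_density) (auto simp: rate_nonneg pos intro!: divide_nonneg_pos)
  then show ?thesis
    using pos by (simp add: scaleR_conv_of_real)
qed

definition batch_marks :: "real \<Rightarrow> (real \<times> real \<times> (nat \<Rightarrow> real)) measure" where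
  "batch_marks s = B s \<bind> (\<lambda>b. distr (PiM UNIV (\<lambda>_. Sd s)) mark_space (\<lambda>S. (s, b, S)))"

lemma batch_mark_kernel:
  "(\<lambda>(s, b). distr (PiM (UNIV::nat set) (\<lambda>_. Sd s)) mark_space (\<lambda>S. (s, b, S)))
     \<in> borel \<Otimes>\<^sub>M borel \<rightarrow>\<^sub>M prob_algebra mark_space"
proof -
  have "(\<lambda>x. distr (PiM (UNIV::nat set) (\<lambda>_. Sd (fst x))) mark_space (\<lambda>S. (fst x, snd x, S)))
      \<in> borel \<Otimes>\<^sub>M borel \<rightarrow>\<^sub>M prob_algebra mark_space"
  proof (rule measurable_distr_prob_space2[where M="PiM UNIV (\<lambda>_. borel)"])
    show "(\<lambda>x. PiM (UNIV::nat set) (\<lambda>_. Sd (fst x))) \<in> borel \<Otimes>\<^sub>M borel \<rightarrow>\<^sub>M prob_algebra (PiM UNIV (\<lambda>_. borel))"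
      by (rule measurable_compose[OF measurable_fst measurable_PiM_iid_kernel[OF Sd_kernel]])
    show "(\<lambda>(x, y). (fst x, snd x, y)) \<in> (borel \<Otimes>\<^sub>M borel) \<Otimes>\<^sub>M PiM (UNIV::nat set) (\<lambda>_. borel) \<rightarrow>\<^sub>M mark_space"
      unfolding mark_space_def by measurable
  qed
  then show ?thesis by (simp add: case_prod_beta')
qed

lemma batch_marks_kernel[measurable]: "batch_marks \<in> borel \<rightarrow>\<^sub>M prob_algebra mark_space"
  unfolding batch_marks_def
  by (rule measurable_bind_prob_space2[OF B_kernel]) (use batch_mark_kernel in simp)

lemma batch_marks_prob: "prob_space (batch_marks s)"
  and batch_marks_sets: "sets (batch_marks s) = sets mark_space"
  using measurable_space[OF batch_marks_kernel, of s] by (auto simp: space_prob_algebra)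

lemma mark_dist_eq_bind: "mark_dist lam B Sd t = arrival_time_dist lam t \<bind> batch_marks"
  by (simp add: mark_dist_def batch_marks_def[abs_def])

lemma mark_dist_prob: "prob_space (mark_dist lam B Sd t)"
  and mark_dist_sets: "sets (mark_dist lam B Sd t) = sets mark_space"
  unfolding mark_dist_eq_bind
  using prob_space_bind'[OF arrival_time_dist_prob batch_marks_kernel]
    sets_bind'[OF arrival_time_dist_prob batch_marks_kernel]
  by auto

lemma integral_batch_marks:
  fixes g :: "real \<times> real \<times> (nat \<Rightarrow> real) \<Rightarrow> complex"
  assumes g_meas[measurable]: "g \<in> borel_measurable mark_space" and g_bound: "\<And>x. cmod (g x) \<le> 1"
  shows "(\<integral>x. g x \<partial>batch_marks s) = (\<integral>b. (\<integral>S. g (s, b, S) \<partial>PiM UNIV (\<lambda>_. Sd s)) \<partial>B s)"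
proof -
  have "(\<integral>x. g x \<partial>batch_marks s)
      = (\<integral>b. (\<integral>x. g x \<partial>distr (PiM UNIV (\<lambda>_. Sd s)) mark_space (\<lambda>S. (s, b, S))) \<partial>B s)"
    unfolding batch_marks_def
    by (rule integral_bind_complex[OF g_meas _ _ B_prob, where C=1])
       (use g_bound measurable_Pair2[OF batch_mark_kernel, of s] in auto)
  also have "\<dots> = (\<integral>b. (\<integral>S. g (s, b, S) \<partial>PiM UNIV (\<lambda>_. Sd s)) \<partial>B s)"
  proof (intro Bochner_Integration.integral_cong refl integral_distr)
    have "sets (PiM UNIV (\<lambda>_. Sd s)) = sets (PiM UNIV (\<lambda>_::nat. borel::real measure))"
      using Sd_sets by (intro sets_PiM_cong) auto
    moreover have "(\<lambda>S. (s, b, S)) \<in> PiM UNIV (\<lambda>_::nat. borel::real measure) \<rightarrow>\<^sub>M mark_space" for b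
      unfolding mark_space_def by measurable
    ultimately show "(\<lambda>S. (s, b, S)) \<in> PiM UNIV (\<lambda>_. Sd s) \<rightarrow>\<^sub>M mark_space" for b
      by (simp cong: measurable_cong_sets)
  qed simp
  finally show ?thesis .
qed

lemma integral_mark_dist:
  fixes g :: "real \<times> real \<times> (nat \<Rightarrow> real) \<Rightarrow> complex"
  assumes g_meas[measurable]: "g \<in> borel_measurable mark_space" and g_bound: "\<And>x. cmod (g x) \<le> 1"
  shows "(\<integral>x. g x \<partial>mark_dist lam B Sd t) = (\<integral>s. (\<integral>x. g x \<partial>batch_marks s) \<partial>arrival_time_dist lam t)"
  unfolding mark_dist_eq_bind
  by (rule integral_bind_complex[OF g_meas _ _ arrival_time_dist_prob_space, where C=1])
     (use g_bound arrival_time_dist_sets in \<open>auto cong: measurable_cong_sets\<close>)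

lemma integral_batch_marks_measurable[measurable]:
  fixes g :: "real \<times> real \<times> (nat \<Rightarrow> real) \<Rightarrow> complex"
  assumes "g \<in> borel_measurable mark_space"
  shows "(\<lambda>s. \<integral>x. g x \<partial>batch_marks s) \<in> borel_measurable borel"
  by (rule measurable_compose[OF measurable_prob_algebraD[OF batch_marks_kernel]
        integral_measurable_subprob_algebra[OF assms]])

lemma norm_integral_batch_marks_le_1:
  fixes g :: "real \<times> real \<times> (nat \<Rightarrow> real) \<Rightarrow> complex"
  assumes "g \<in> borel_measurable mark_space" and "\<And>x. cmod (g x) \<le> 1"
  shows "cmod (\<integral>x. g x \<partial>batch_marks s) \<le> 1"
  using assms batch_marks_sets[of s]
  by (intro prob_space.norm_integral_le_const[OF batch_marks_prob] AE_I2) (auto cong: measurable_cong_sets)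

lemma queue_sample_eq:
  "queue_sample lam B Sd t = measure_pmf (num_arrivals lam t) \<Otimes>\<^sub>M PiM UNIV (\<lambda>_. mark_dist lam B Sd t)"
  by (simp add: queue_sample_def)

lemma queue_sample_pair:
  "pair_prob_space (measure_pmf (num_arrivals lam t)) (PiM (UNIV::nat set) (\<lambda>_. mark_dist lam B Sd t))"
proof -
  have "prob_space (PiM UNIV (\<lambda>_::nat. mark_dist lam B Sd t))"
    by (rule prob_space_PiM) (rule mark_dist_prob)
  then show ?thesis
    by (auto simp: pair_prob_space_def pair_sigma_finite_def prob_space_measure_pmf
        intro: prob_space_imp_sigma_finite)
qed

lemma queue_sample_prob: "prob_space (queue_sample lam B Sd t)"
proof -
  interpret pair_prob_space "measure_pmf (num_arrivals lam t)" "PiM (UNIV::nat set) (\<lambda>_. mark_dist lam B Sd t)"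
    by (rule queue_sample_pair)
  show ?thesis unfolding queue_sample_eq by (rule prob_space_axioms)
qed

lemma measurable_mark_component:
  assumes "g \<in> borel_measurable mark_space"
  shows "(\<lambda>x. g (x i)) \<in> borel_measurable (PiM (UNIV::nat set) (\<lambda>_. mark_dist lam B Sd t))"
  using measurable_compose[OF measurable_component_singleton[of i UNIV] assms] mark_dist_sets
  by (simp cong: measurable_cong_sets)

lemma measurable_prod_marks:
  fixes g :: "_ \<Rightarrow> 'b::{real_normed_field,second_countable_topology}"
  assumes "g \<in> borel_measurable mark_space"
  shows "(\<lambda>\<omega>. \<Prod>i<fst \<omega>. g (snd \<omega> i)) \<in> borel_measurable (queue_sample lam B Sd t)"
  unfolding queue_sample_eq
  by (rule measurable_compose_countable'[where I=UNIV and g=fst])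
     (auto intro!: borel_measurable_prod measurable_compose[OF measurable_snd measurable_mark_component[OF assms]])

lemma measurable_sum_marks:
  fixes g :: "_ \<Rightarrow> real"
  assumes "g \<in> borel_measurable mark_space"
  shows "(\<lambda>\<omega>. \<Sum>i<fst \<omega>. g (snd \<omega> i)) \<in> borel_measurable (queue_sample lam B Sd t)"
  unfolding queue_sample_eq
  by (rule measurable_compose_countable'[where I=UNIV and g=fst])
     (auto intro!: borel_measurable_sum measurable_compose[OF measurable_snd measurable_mark_component[OF assms]])

text \<open>Given the number of batches, the marks are i.i.d., so the Poisson generating function
  applies.\<close>
lemma integral_prod_marks_poisson:
  fixes g :: "real \<times> real \<times> (nat \<Rightarrow> real) \<Rightarrow> complex"
  assumes g_meas[measurable]: "g \<in> borel_measurable mark_space" and g_bound: "\<And>x. cmod (g x) \<le> 1"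
  shows "(\<integral>\<omega>. (\<Prod>i<fst \<omega>. g (snd \<omega> i)) \<partial>queue_sample lam B Sd t)
    = exp (of_real (cum_rate lam t) * ((\<integral>x. g x \<partial>mark_dist lam B Sd t) - 1))"
proof -
  interpret pair_prob_space "measure_pmf (num_arrivals lam t)" "PiM (UNIV::nat set) (\<lambda>_. mark_dist lam B Sd t)"
    by (rule queue_sample_pair)
  interpret M: prob_space "mark_dist lam B Sd t" by (rule mark_dist_prob)
  interpret Q: prob_space "queue_sample lam B Sd t" by (rule queue_sample_prob)
  have g_int: "integrable (mark_dist lam B Sd t) g"
    using g_bound mark_dist_sets
    by (intro M.integrable_const_bound[where B=1]) (auto cong: measurable_cong_sets)
  have prod_bound: "cmod (\<Prod>i<n. g (x i)) \<le> 1" for n :: nat and x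
    by (simp only: prod_norm[symmetric]) (intro prod_le_1 conjI norm_ge_zero g_bound)
  have prod_int: "integrable (queue_sample lam B Sd t) (\<lambda>\<omega>. \<Prod>i<fst \<omega>. g (snd \<omega> i))"
    using measurable_prod_marks[OF g_meas] prod_bound
    by (intro Q.integrable_const_bound[where B=1]) auto
  then have "(\<integral>\<omega>. (\<Prod>i<fst \<omega>. g (snd \<omega> i)) \<partial>queue_sample lam B Sd t) =
      (\<integral>n. (\<integral>x. (\<Prod>i<n. g (x i)) \<partial>PiM UNIV (\<lambda>_. mark_dist lam B Sd t)) \<partial>measure_pmf (num_arrivals lam t))"
    using integral_fst'[OF prod_int[unfolded queue_sample_eq]] by (simp add: queue_sample_eq)
  also have "\<dots> = (\<integral>n. (\<integral>x. g x \<partial>mark_dist lam B Sd t) ^ n \<partial>measure_pmf (num_arrivals lam t))"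
    by (intro Bochner_Integration.integral_cong refl integral_PiM_prod_power[OF mark_dist_prob g_int])
  also have "\<dots> = exp (of_real (cum_rate lam t) * ((\<integral>x. g x \<partial>mark_dist lam B Sd t) - 1))"
    using cum_rate_nonneg
    by (cases "cum_rate lam t = 0") (simp_all add: num_arrivals_def integral_poisson_pmf_power)
  finally show ?thesis .
qed

lemma cum_rate_mult_integral_mark_dist:
  fixes g :: "real \<times> real \<times> (nat \<Rightarrow> real) \<Rightarrow> complex"
  assumes g_meas[measurable]: "g \<in> borel_measurable mark_space" and g_bound: "\<And>x. cmod (g x) \<le> 1"
  shows "of_real (cum_rate lam t) * ((\<integral>x. g x \<partial>mark_dist lam B Sd t) - 1)
    = (\<integral>s. of_real (indicator {0..t} s * lam s) * ((\<integral>x. g x \<partial>batch_marks s) - 1) \<partial>lborel)"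
proof -
  interpret A: prob_space "arrival_time_dist lam t" by (rule arrival_time_dist_prob_space)
  have "integrable (arrival_time_dist lam t) (\<lambda>s. \<integral>x. g x \<partial>batch_marks s)"
    using norm_integral_batch_marks_le_1[OF g_meas g_bound] arrival_time_dist_sets
    by (intro A.integrable_const_bound[where B=1]) (auto cong: measurable_cong_sets)
  then have "(\<integral>x. g x \<partial>mark_dist lam B Sd t) - 1 = (\<integral>s. (\<integral>x. g x \<partial>batch_marks s) - 1 \<partial>arrival_time_dist lam t)"
    by (simp add: integral_mark_dist[OF g_meas g_bound] A.prob_space)
  then show ?thesis
    by (simp add: cum_rate_mult_integral_arrival_time_dist)
qed

lemma integral_prod_marks:
  fixes g :: "real \<times> real \<times> (nat \<Rightarrow> real) \<Rightarrow> complex"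
  assumes "g \<in> borel_measurable mark_space" and "\<And>x. cmod (g x) \<le> 1"
  shows "(\<integral>\<omega>. (\<Prod>i<fst \<omega>. g (snd \<omega> i)) \<partial>queue_sample lam B Sd t)
    = exp (\<integral>s. of_real (indicator {0..t} s * lam s) * ((\<integral>x. g x \<partial>batch_marks s) - 1) \<partial>lborel)"
  using assms by (simp add: integral_prod_marks_poisson cum_rate_mult_integral_mark_dist)

lemma integral_batch_marks_exp_batch_sum:
  assumes f_meas: "(\<lambda>(s, x). f s x) \<in> borel_measurable (borel \<Otimes>\<^sub>M borel)"
    and z: "Re z \<le> 0" and f_nonneg: "\<And>s x. 0 \<le> f s x"
  shows "(\<integral>x. exp (z * of_real (batch_sum f m x) / of_nat m) \<partial>batch_marks s)
    = (\<integral>b. (\<integral>x. exp (z * of_real (f s x) / of_nat m) \<partial>Sd s) ^ batch_size m b \<partial>B s)"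
proof -
  have "(\<integral>x. exp (z * of_real (batch_sum f m x) / of_nat m) \<partial>batch_marks s)
      = (\<integral>b. (\<integral>S. exp (z * of_real (batch_sum f m (s, b, S)) / of_nat m) \<partial>PiM UNIV (\<lambda>_. Sd s)) \<partial>B s)"
    using batch_sum_measurable[OF f_meas] norm_exp_mult_of_real_divide_le_1[OF z batch_sum_nonneg[OF f_nonneg]]
    by (intro integral_batch_marks) auto
  also have "\<dots> = (\<integral>b. (\<integral>x. exp (z * of_real (f s x) / of_nat m) \<partial>Sd s) ^ batch_size m b \<partial>B s)"
  proof (intro Bochner_Integration.integral_cong refl)
    fix b
    interpret Sd_s: prob_space "Sd s" by (rule Sd_prob)
    have "f s \<in> borel_measurable borel"
      using measurable_Pair2[OF f_meas, of s] by simp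
    then have int: "integrable (Sd s) (\<lambda>x. exp (z * of_real (f s x) / of_nat m))"
      using norm_exp_mult_of_real_divide_le_1[OF z f_nonneg] by (intro Sd_s.integrable_const_bound[where B=1]) auto
    moreover have "exp (z * of_real (batch_sum f m (s, b, S)) / of_nat m)
        = (\<Prod>j<batch_size m b. exp (z * of_real (f s (S j)) / of_nat m))" for S
      by (simp add: batch_sum_def sum_distrib_left sum_divide_distrib exp_sum)
    ultimately show "(\<integral>S. exp (z * of_real (batch_sum f m (s, b, S)) / of_nat m) \<partial>PiM UNIV (\<lambda>_. Sd s))
        = (\<integral>x. exp (z * of_real (f s x) / of_nat m) \<partial>Sd s) ^ batch_size m b"
      using integral_PiM_prod_power[OF Sd_prob int, of "batch_size m b"] by simp
  qed
  finally show ?thesis .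
qed

lemma tendsto_integral_batch_marks_exp_batch_sum:
  assumes f_meas: "(\<lambda>(s, x). f s x) \<in> borel_measurable (borel \<Otimes>\<^sub>M borel)"
    and z: "Re z \<le> 0" and f_nonneg: "\<And>s x. 0 \<le> f s x"
    and s: "0 \<le> s" and f_int: "integrable (Sd s) (f s)"
  shows "(\<lambda>m. \<integral>x. exp (z * of_real (batch_sum f m x) / of_nat m) \<partial>batch_marks s)
    \<longlonglongrightarrow> (\<integral>b. exp (of_real b * (z * of_real (\<integral>x. f s x \<partial>Sd s))) \<partial>B s)"
proof -
  interpret Sd_s: prob_space "Sd s" by (rule Sd_prob)
  interpret B_s: prob_space "B s" by (rule B_prob)
  have [measurable]: "f s \<in> borel_measurable borel"
    using measurable_Pair2[OF f_meas, of s] by simp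
  have "(\<lambda>m. \<integral>b. (\<integral>x. exp (z * of_real (f s x) / of_nat m) \<partial>Sd s) ^ batch_size m b \<partial>B s)
        \<longlonglongrightarrow> (\<integral>b. exp (of_real b * (z * of_real (\<integral>x. f s x \<partial>Sd s))) \<partial>B s)"
  proof (rule integral_dominated_convergence[where w="\<lambda>_. 1"])
    show "AE b in B s. (\<lambda>m. (\<integral>x. exp (z * of_real (f s x) / of_nat m) \<partial>Sd s) ^ batch_size m b)
            \<longlonglongrightarrow> exp (of_real b * (z * of_real (\<integral>x. f s x \<partial>Sd s)))"
      using B_nonneg[OF s]
      by eventually_elim
         (simp add: batch_size_def tendsto_integral_exp_power_nat_ceiling[OF Sd_prob f_int _ z] f_nonneg)
    have "cmod (\<integral>x. exp (z * of_real (f s x) / of_nat m) \<partial>Sd s) \<le> 1" for m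
      using norm_exp_mult_of_real_divide_le_1[OF z f_nonneg] by (intro Sd_s.norm_integral_le_const) auto
    then show "AE b in B s. norm ((\<integral>x. exp (z * of_real (f s x) / of_nat m) \<partial>Sd s) ^ batch_size m b) \<le> 1"
      for m
      by (simp add: norm_power power_le_one)
  qed auto
  then show ?thesis
    by (simp add: integral_batch_marks_exp_batch_sum[OF f_meas z f_nonneg])
qed

definition limit_exponent :: "(real \<Rightarrow> real \<Rightarrow> real) \<Rightarrow> complex \<Rightarrow> real \<Rightarrow> complex" where
  "limit_exponent f z s = of_real (indicator {0..t} s * lam s)
     * ((\<integral>b. exp (of_real b * (z * of_real (\<integral>x. f s x \<partial>Sd s))) \<partial>B s) - 1)"

lemma tendsto_limit_exponent:
  assumes f_meas: "(\<lambda>(s, x). f s x) \<in> borel_measurable (borel \<Otimes>\<^sub>M borel)"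
    and z: "Re z \<le> 0" and f_nonneg: "\<And>s x. 0 \<le> f s x"
    and f_int: "\<And>s. 0 \<le> s \<Longrightarrow> integrable (Sd s) (f s)"
  shows "(\<lambda>m. of_real (indicator {0..t} s * lam s)
      * ((\<integral>x. exp (z * of_real (batch_sum f m x) / of_nat m) \<partial>batch_marks s) - 1))
    \<longlonglongrightarrow> limit_exponent f z s"
proof (cases "s \<in> {0..t}")
  case True
  then show ?thesis
    unfolding limit_exponent_def
    by (intro tendsto_mult tendsto_const tendsto_diff tendsto_integral_batch_marks_exp_batch_sum
        f_meas z f_nonneg f_int) auto
qed (simp add: limit_exponent_def)

lemma limit_exponent_measurable:
  assumes f_meas: "(\<lambda>(s, x). f s x) \<in> borel_measurable (borel \<Otimes>\<^sub>M borel)"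
    and "Re z \<le> 0" and "\<And>s x. 0 \<le> f s x"
    and "\<And>s. 0 \<le> s \<Longrightarrow> integrable (Sd s) (f s)"
  shows "limit_exponent f z \<in> borel_measurable borel"
proof (rule borel_measurable_LIMSEQ_metric[OF _ tendsto_limit_exponent[OF assms]])
  fix m
  have "(\<lambda>x. exp (z * of_real (batch_sum f m x) / of_nat m)) \<in> borel_measurable mark_space"
    using batch_sum_measurable[OF f_meas] by measurable
  from integral_batch_marks_measurable[OF this]
  show "(\<lambda>s. of_real (indicator {0..t} s * lam s)
      * ((\<integral>x. exp (z * of_real (batch_sum f m x) / of_nat m) \<partial>batch_marks s) - 1)) \<in> borel_measurable borel"
    by measurable
qed

lemma norm_rate_mult_integral_batch_marks_minus_one_le:
  fixes g :: "real \<times> real \<times> (nat \<Rightarrow> real) \<Rightarrow> complex"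
  assumes "g \<in> borel_measurable mark_space" and "\<And>x. cmod (g x) \<le> 1"
  shows "cmod (of_real (indicator {0..t} s * lam s) * ((\<integral>x. g x \<partial>batch_marks s) - 1))
    \<le> 2 * (indicator {0..t} s * lam s)"
proof -
  have "cmod ((\<integral>x. g x \<partial>batch_marks s) - 1) \<le> 2"
    using norm_triangle_ineq4[of "\<integral>x. g x \<partial>batch_marks s" 1]
      norm_integral_batch_marks_le_1[OF assms, where s=s]
    by simp
  then have "(indicator {0..t} s * lam s) * cmod ((\<integral>x. g x \<partial>batch_marks s) - 1)
      \<le> (indicator {0..t} s * lam s) * 2"
    using rate_nonneg by (rule mult_left_mono)
  moreover have "cmod (of_real (indicator {0..t} s * lam s) * ((\<integral>x. g x \<partial>batch_marks s) - 1))
      = (indicator {0..t} s * lam s) * cmod ((\<integral>x. g x \<partial>batch_marks s) - 1)"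
    by (simp only: norm_mult norm_of_real abs_of_nonneg[OF rate_nonneg])
  ultimately show ?thesis
    by (simp add: mult.commute)
qed

lemma integral_exp_sum_batch_sum:
  assumes f_meas: "(\<lambda>(s, x). f s x) \<in> borel_measurable (borel \<Otimes>\<^sub>M borel)"
    and z: "Re z \<le> 0" and f_nonneg: "\<And>s x. 0 \<le> f s x"
  shows "(\<integral>\<omega>. exp (z * of_real (\<Sum>i<fst \<omega>. batch_sum f m (snd \<omega> i)) / of_nat m) \<partial>queue_sample lam B Sd t)
    = exp (\<integral>s. of_real (indicator {0..t} s * lam s)
        * ((\<integral>x. exp (z * of_real (batch_sum f m x) / of_nat m) \<partial>batch_marks s) - 1) \<partial>lborel)"
proof -
  have g_meas: "(\<lambda>x. exp (z * of_real (batch_sum f m x) / of_nat m)) \<in> borel_measurable mark_space"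
    using batch_sum_measurable[OF f_meas] by measurable
  have g_bound: "cmod (exp (z * of_real (batch_sum f m x) / of_nat m)) \<le> 1" for x
    by (rule norm_exp_mult_of_real_divide_le_1[OF z batch_sum_nonneg[OF f_nonneg]])
  have "exp (z * of_real (\<Sum>i<n. batch_sum f m (x i)) / of_nat m)
      = (\<Prod>i<n. exp (z * of_real (batch_sum f m (x i)) / of_nat m))" for n :: nat and x
    by (simp add: sum_distrib_left sum_divide_distrib exp_sum)
  then show ?thesis
    by (simp only: integral_prod_marks[OF g_meas g_bound])
qed

lemma tendsto_integral_exp_sum_batch_sum:
  assumes f_meas: "(\<lambda>(s, x). f s x) \<in> borel_measurable (borel \<Otimes>\<^sub>M borel)"
    and z: "Re z \<le> 0" and f_nonneg: "\<And>s x. 0 \<le> f s x"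
    and "\<And>s. 0 \<le> s \<Longrightarrow> integrable (Sd s) (f s)"
  shows "(\<lambda>m. \<integral>\<omega>. exp (z * of_real (\<Sum>i<fst \<omega>. batch_sum f m (snd \<omega> i)) / of_nat m) \<partial>queue_sample lam B Sd t)
    \<longlonglongrightarrow> exp (\<integral>s. limit_exponent f z s \<partial>lborel)"
  unfolding integral_exp_sum_batch_sum[OF f_meas z f_nonneg]
proof (intro tendsto_exp integral_dominated_convergence[where w="\<lambda>s. 2 * (indicator {0..t} s * lam s)"])
  have g_meas: "(\<lambda>x. exp (z * of_real (batch_sum f m x) / of_nat m)) \<in> borel_measurable mark_space" for m
    using batch_sum_measurable[OF f_meas] by measurable
  note g_bound = norm_exp_mult_of_real_divide_le_1[OF z batch_sum_nonneg[OF f_nonneg]]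
  show "AE s in lborel. norm (of_real (indicator {0..t} s * lam s)
      * ((\<integral>x. exp (z * of_real (batch_sum f m x) / of_nat m) \<partial>batch_marks s) - 1))
      \<le> 2 * (indicator {0..t} s * lam s)" for m
    by (intro AE_I2 norm_rate_mult_integral_batch_marks_minus_one_le[OF g_meas g_bound])
  show "(\<lambda>s. of_real (indicator {0..t} s * lam s)
      * ((\<integral>x. exp (z * of_real (batch_sum f m x) / of_nat m) \<partial>batch_marks s) - 1)) \<in> borel_measurable lborel" for m
    using integral_batch_marks_measurable[OF g_meas] by simp
qed (use rate_integrable limit_exponent_measurable[OF assms] tendsto_limit_exponent[OF assms] in auto)

section \<open>The Laplace transform of the scaled queue\<close>

definition remaining_work :: "real \<Rightarrow> real \<Rightarrow> real" where
  "remaining_work s x = max 0 (x - (t - s))"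

definition customer_cost :: "real \<Rightarrow> real \<Rightarrow> real \<Rightarrow> real \<Rightarrow> real \<Rightarrow> real" where
  "customer_cost \<alpha> \<beta> \<gamma> s x =
     \<alpha> * remaining_work s x + \<beta> * of_bool (t < s + x) + \<gamma> * of_bool (0 < s + x \<and> s + x \<le> t)"

lemma remaining_work_measurable: "(\<lambda>(s, x). remaining_work s x) \<in> borel_measurable (borel \<Otimes>\<^sub>M borel)"
  unfolding remaining_work_def by measurable

lemma customer_cost_measurable:
  "(\<lambda>(s, x). customer_cost \<alpha> \<beta> \<gamma> s x) \<in> borel_measurable (borel \<Otimes>\<^sub>M borel)"
  unfolding customer_cost_def remaining_work_def by measurable

lemma customer_cost_nonneg: "0 \<le> \<alpha> \<Longrightarrow> 0 \<le> \<beta> \<Longrightarrow> 0 \<le> \<gamma> \<Longrightarrow> 0 \<le> customer_cost \<alpha> \<beta> \<gamma> s x"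
  by (simp add: customer_cost_def remaining_work_def)

lemma workload_eq_sum_batch_sum: "workload m t \<omega> = (\<Sum>i<fst \<omega>. batch_sum remaining_work m (snd \<omega> i))"
  by (simp add: workload_def batch_sum_def remaining_work_def)

lemma sum_batch_sum_customer_cost:
  "(\<Sum>i<fst \<omega>. batch_sum (customer_cost \<alpha> \<beta> \<gamma>) m (snd \<omega> i))
    = \<alpha> * workload m t \<omega> + \<beta> * num_present m t \<omega> + \<gamma> * num_departed m t \<omega>"
proof -
  have card_eq: "real (card {j. j < n \<and> P j}) = (\<Sum>j<n. of_bool (P j))" for n :: nat and P
    by (simp add: Int_def conj_commute)
  show ?thesis
    unfolding workload_eq_sum_batch_sum num_present_def num_departed_def
    by (simp add: batch_sum_def customer_cost_def card_eq sum.distrib sum_distrib_left split_beta mult.commute)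
qed

lemma remaining_work_integrable:
  assumes s: "0 \<le> s"
  shows "integrable (Sd s) (remaining_work s)"
proof (rule Bochner_Integration.integrable_bound[where f="\<lambda>x. \<bar>x\<bar> + \<bar>t - s\<bar>"])
  interpret Sd_s: prob_space "Sd s" by (rule Sd_prob)
  show "integrable (Sd s) (\<lambda>x. \<bar>x\<bar> + \<bar>t - s\<bar>)"
    using Sd_mean[OF s] by (intro Bochner_Integration.integrable_add integrable_abs) simp_all
  show "remaining_work s \<in> borel_measurable (Sd s)"
    unfolding remaining_work_def by measurable
  show "AE x in Sd s. norm (remaining_work s x) \<le> norm (\<bar>x\<bar> + \<bar>t - s\<bar>)"
    by (intro AE_I2) (auto simp: remaining_work_def)
qed

lemma integrable_of_bool_Sd:
  assumes "{x. P x} \<in> sets borel"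
  shows "integrable (Sd s) (\<lambda>x. of_bool (P x) :: real)"
proof -
  interpret Sd_s: prob_space "Sd s" by (rule Sd_prob)
  have "(\<lambda>x. of_bool (P x) :: real) = indicator {x. P x}"
    by (simp add: fun_eq_iff indicator_def)
  moreover have "integrable (Sd s) (indicator {x. P x} :: real \<Rightarrow> real)"
    using assms Sd_sets by (intro Sd_s.integrable_const_bound[where B=1]) auto
  ultimately show ?thesis by simp
qed

lemma customer_cost_integrable:
  assumes s: "0 \<le> s"
  shows "integrable (Sd s) (customer_cost \<alpha> \<beta> \<gamma> s)"
proof -
  have "integrable (Sd s) (\<lambda>x. of_bool (t < s + x) :: real)"
    and "integrable (Sd s) (\<lambda>x. of_bool (0 < s + x \<and> s + x \<le> t) :: real)"
    by (rule integrable_of_bool_Sd, measurable)+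
  then show ?thesis
    unfolding customer_cost_def
    by (intro Bochner_Integration.integrable_add integrable_mult_right remaining_work_integrable[OF s])
qed

lemma integral_remaining_work:
  assumes s: "0 \<le> s" "s \<le> t"
  shows "(\<integral>x. remaining_work s x \<partial>Sd s) = mean_work Sd s * Fbar_e Sd s (t - s)"
proof (cases "mean_work Sd s = 0")
  case True
  interpret Sd_s: prob_space "Sd s" by (rule Sd_prob)
  have "AE x in Sd s. x = 0"
    using True Sd_nonneg[OF s(1)] Sd_mean[OF s(1)]
    by (subst integral_nonneg_eq_0_iff_AE[symmetric]) (auto simp: mean_work_def)
  then have "AE x in Sd s. remaining_work s x = 0"
    by eventually_elim (use s in \<open>simp add: remaining_work_def\<close>)
  then show ?thesis
    using True by (simp add: integral_eq_zero_AE)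
next
  case False
  interpret real_distribution "Sd s"
    using Sd_prob Sd_sets by (simp add: real_distribution_def real_distribution_axioms_def)
  show ?thesis
    using False integral_max_0_minus_eq_tail[of "t - s"]
    by (simp add: remaining_work_def Fbar_e_def Fbar_def)
qed

text \<open>At \<open>s = 0\<close> the formula fails: a customer arriving at time 0 with zero work is counted by
  \<open>cdf\<close> but does not depart in \<open>(0, t]\<close>.\<close>
lemma integral_customer_cost:
  assumes s: "0 < s" "s \<le> t"
  shows "(\<integral>x. customer_cost \<alpha> \<beta> \<gamma> s x \<partial>Sd s)
    = \<alpha> * mean_work Sd s * Fbar_e Sd s (t - s) + \<beta> * Fbar Sd s (t - s) + \<gamma> * cdf (Sd s) (t - s)"
proof -
  interpret Sd_s: prob_space "Sd s" by (rule Sd_prob)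
  have space_Sd: "space (Sd s) = UNIV" using sets_eq_imp_space_eq[OF Sd_sets] by simp
  have "(\<lambda>x. of_bool (t < s + x) :: real) = indicator (UNIV - {..t - s})"
    by (auto simp: fun_eq_iff indicator_def)
  then have present: "(\<integral>x. of_bool (t < s + x) \<partial>Sd s :: real) = Fbar Sd s (t - s)"
    using Sd_s.prob_compl[of "{..t - s}"] by (simp add: space_Sd Fbar_def cdf_def2)
  have ae: "AE x in Sd s. of_bool (0 < s + x \<and> s + x \<le> t) = (indicator {..t - s} x :: real)"
    using Sd_nonneg[of s] s by (auto elim!: eventually_mono simp: indicator_def)
  have "(\<integral>x. of_bool (0 < s + x \<and> s + x \<le> t) \<partial>Sd s) = (\<integral>x. indicator {..t - s} x \<partial>Sd s :: real)"
    by (rule Bochner_Integration.integral_cong_AE[OF _ _ ae]) simp_all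
  then have departed: "(\<integral>x. of_bool (0 < s + x \<and> s + x \<le> t) \<partial>Sd s :: real) = cdf (Sd s) (t - s)"
    by (simp add: cdf_def2)
  have "integrable (Sd s) (\<lambda>x. of_bool (t < s + x) :: real)"
    and "integrable (Sd s) (\<lambda>x. of_bool (0 < s + x \<and> s + x \<le> t) :: real)"
    by (rule integrable_of_bool_Sd, measurable)+
  then show ?thesis
    using s present departed remaining_work_integrable[of s] integral_remaining_work[of s]
    by (simp add: customer_cost_def)
qed

lemma limit_exponent_customer_cost:
  assumes abc: "0 \<le> \<alpha>" "0 \<le> \<beta>" "0 \<le> \<gamma>" and s0: "s \<noteq> 0"
  shows "limit_exponent (customer_cost \<alpha> \<beta> \<gamma>) (-1) s = - of_real (indicator {0..t} s *
    ((\<integral>b. 1 - exp (- b * (\<alpha> * mean_work Sd s * Fbar_e Sd s (t - s) + \<beta> * Fbar Sd s (t - s)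
        + \<gamma> * cdf (Sd s) (t - s))) \<partial>B s) * lam s))"
proof (cases "s \<in> {0..t}")
  case True
  then have s: "0 < s" "s \<le> t" using s0 by auto
  interpret B_s: prob_space "B s" by (rule B_prob)
  define C where "C = \<alpha> * mean_work Sd s * Fbar_e Sd s (t - s) + \<beta> * Fbar Sd s (t - s) + \<gamma> * cdf (Sd s) (t - s)"
  have C_eq: "(\<integral>x. customer_cost \<alpha> \<beta> \<gamma> s x \<partial>Sd s) = C"
    unfolding C_def using s by (rule integral_customer_cost)
  have "0 \<le> C"
    unfolding C_eq[symmetric] by (intro integral_nonneg_AE AE_I2 customer_cost_nonneg abc)
  then have "integrable (B s) (\<lambda>b. exp (- b * C))"
    using B_nonneg[of s] s by (intro B_s.integrable_const_bound[where B=1]) (auto elim!: eventually_mono)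
  then have one_minus: "(\<integral>b. 1 - exp (- b * C) \<partial>B s) = 1 - (\<integral>b. exp (- b * C) \<partial>B s)"
    by (simp add: B_s.prob_space)
  have "exp (of_real b * (- 1 * of_real C)) = complex_of_real (exp (- b * C))" for b
    by (simp flip: exp_of_real)
  then have E: "(\<integral>b. exp (of_real b * (- 1 * of_real C)) \<partial>B s) = complex_of_real (\<integral>b. exp (- b * C) \<partial>B s)"
    by simp
  show ?thesis
    unfolding C_def[symmetric] limit_exponent_def C_eq E one_minus
    using True by (simp add: algebra_simps)
qed (simp add: limit_exponent_def)

lemma integral_limit_exponent_customer_cost:
  assumes abc: "0 \<le> \<alpha>" "0 \<le> \<beta>" "0 \<le> \<gamma>"
  shows "(\<integral>s. limit_exponent (customer_cost \<alpha> \<beta> \<gamma>) (-1) s \<partial>lborel) = complex_of_real (- (LINT s:{0..t}|lborel.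
      (\<integral>b. 1 - exp (- b * (\<alpha> * mean_work Sd s * Fbar_e Sd s (t - s)
          + \<beta> * Fbar Sd s (t - s) + \<gamma> * cdf (Sd s) (t - s))) \<partial>B s) * lam s))"
    (is "_ = complex_of_real (- (LINT s:{0..t}|lborel. ?R s))")
proof -
  note limit_meas = limit_exponent_measurable[OF customer_cost_measurable _
      customer_cost_nonneg[OF abc] customer_cost_integrable]
  define G where "G s = complex_of_real (- (indicator {0..t} s * ?R s))" for s
  have G_eq: "limit_exponent (customer_cost \<alpha> \<beta> \<gamma>) (-1) s = G s" if "s \<noteq> 0" for s
    using limit_exponent_customer_cost[OF abc that] by (simp add: G_def mult.assoc)
  have "(\<lambda>s. if s \<in> {0} then G 0 else limit_exponent (customer_cost \<alpha> \<beta> \<gamma>) (-1) s) \<in> borel_measurable borel"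
    by (intro measurable_If_set measurable_const limit_meas) auto
  moreover have "(\<lambda>s. if s \<in> {0} then G 0 else limit_exponent (customer_cost \<alpha> \<beta> \<gamma>) (-1) s) = G"
    using G_eq by (auto simp: fun_eq_iff)
  ultimately have "G \<in> borel_measurable borel" by simp
  then have "(\<integral>s. limit_exponent (customer_cost \<alpha> \<beta> \<gamma>) (-1) s \<partial>lborel) = (\<integral>s. G s \<partial>lborel)"
    using AE_lborel_singleton[of 0] G_eq limit_meas
    by (intro Bochner_Integration.integral_cong_AE) (auto elim!: eventually_mono)
  then show ?thesis
    by (simp only: G_def integral_complex_of_real integral_minus set_lebesgue_integral_def real_scaleR_def)
qed

lemma exp_scaled_queue_eq_exp_sum_batch_sum:
  "complex_of_real (exp (- \<alpha> * (workload m t \<omega> / real m) - \<beta> * (num_present m t \<omega> / real m)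
      - \<gamma> * (num_departed m t \<omega> / real m)))
    = exp (- 1 * of_real (\<Sum>i<fst \<omega>. batch_sum (customer_cost \<alpha> \<beta> \<gamma>) m (snd \<omega> i)) / of_nat m)"
proof -
  have "- \<alpha> * (workload m t \<omega> / real m) - \<beta> * (num_present m t \<omega> / real m)
        - \<gamma> * (num_departed m t \<omega> / real m)
      = - (\<alpha> * workload m t \<omega> + \<beta> * num_present m t \<omega> + \<gamma> * num_departed m t \<omega>) / real m"
    by (simp add: diff_divide_distrib add_divide_distrib)
  then show ?thesis
    by (simp only: sum_batch_sum_customer_cost flip: exp_of_real) simp
qed

theorem tendsto_laplace_transform_scaled_queue:
  assumes abc: "0 \<le> \<alpha>" "0 \<le> \<beta>" "0 \<le> \<gamma>"
  shows "(\<lambda>m::nat. \<integral>\<omega>. exp (- \<alpha> * (workload m t \<omega> / real m) - \<beta> * (num_present m t \<omega> / real m)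
                        - \<gamma> * (num_departed m t \<omega> / real m)) \<partial>queue_sample lam B Sd t)
      \<longlonglongrightarrow> exp (- (LINT s:{0..t}|lborel.
            (\<integral>b. 1 - exp (- b * (\<alpha> * mean_work Sd s * Fbar_e Sd s (t - s)
                                 + \<beta> * Fbar Sd s (t - s) + \<gamma> * cdf (Sd s) (t - s))) \<partial>B s) * lam s))"
    (is "?L \<longlonglongrightarrow> exp ?T")
proof -
  have "complex_of_real (?L m) = (\<integral>\<omega>. exp (- 1 * of_real (\<Sum>i<fst \<omega>.
      batch_sum (customer_cost \<alpha> \<beta> \<gamma>) m (snd \<omega> i)) / of_nat m) \<partial>queue_sample lam B Sd t)" for m
    by (simp only: exp_scaled_queue_eq_exp_sum_batch_sum integral_complex_of_real[symmetric])
  moreover have "(\<lambda>m. \<integral>\<omega>. exp (- 1 * of_real (\<Sum>i<fst \<omega>.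
      batch_sum (customer_cost \<alpha> \<beta> \<gamma>) m (snd \<omega> i)) / of_nat m) \<partial>queue_sample lam B Sd t)
    \<longlonglongrightarrow> exp (complex_of_real ?T)"
    unfolding integral_limit_exponent_customer_cost[OF abc, symmetric]
    by (rule tendsto_integral_exp_sum_batch_sum[OF customer_cost_measurable _ customer_cost_nonneg[OF abc]
          customer_cost_integrable]) simp
  ultimately have "(\<lambda>m. complex_of_real (?L m)) \<longlonglongrightarrow> complex_of_real (exp ?T)"
    by (simp only: exp_of_real)
  then show ?thesis
    by (simp only: tendsto_of_real_iff)
qed

section \<open>Weak convergence of the scaled workload\<close>

lemma cdf_Sd_measurable: "(\<lambda>(s, v). cdf (Sd s) v) \<in> borel_measurable (borel \<Otimes>\<^sub>M borel)"
proof -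
  have "{q \<in> space ((borel \<Otimes>\<^sub>M borel) \<Otimes>\<^sub>M borel). snd q \<le> snd (fst q)}
      \<in> sets ((borel \<Otimes>\<^sub>M borel) \<Otimes>\<^sub>M (borel::real measure))"
    by measurable
  also have "{q \<in> space ((borel \<Otimes>\<^sub>M borel) \<Otimes>\<^sub>M borel). snd q \<le> snd (fst q)}
      = (SIGMA p:space (borel \<Otimes>\<^sub>M (borel::real measure)). {..snd p})"
    by (auto simp: space_pair_measure)
  finally have "(\<lambda>p. measure (Sd (fst p)) {..snd p}) \<in> borel_measurable (borel \<Otimes>\<^sub>M borel)"
    by (rule measure_measurable_prob_algebra2[OF _ measurable_compose[OF measurable_fst Sd_kernel]])
  then show ?thesis by (simp add: cdf_def2 case_prod_beta')
qed

lemma mean_work_measurable[measurable]: "(\<lambda>s. mean_work Sd s) \<in> borel_measurable borel"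
  unfolding mean_work_def
  by (rule measurable_compose[OF measurable_prob_algebraD[OF Sd_kernel] integral_measurable_subprob_algebra]) simp

lemma mean_excess_measurable[measurable]:
  "(\<lambda>s. mean_work Sd s * Fbar_e Sd s (t - s)) \<in> borel_measurable borel"
proof -
  have "(\<lambda>(s, v). indicator {t - s..} v * Fbar Sd s v) \<in> borel_measurable (borel \<Otimes>\<^sub>M borel)"
    using cdf_Sd_measurable unfolding Fbar_def by (simp add: case_prod_beta' indicator_def) measurable
  then have "(\<lambda>(s, v). indicator {t - s..} v * Fbar Sd s v) \<in> borel_measurable (borel \<Otimes>\<^sub>M lborel)"
    by (simp cong: measurable_cong_sets[OF sets_pair_measure_cong[OF refl sets_lborel]])
  from lborel.borel_measurable_lebesgue_integral[OF this]
  show ?thesis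
    by (simp add: Fbar_e_def set_lebesgue_integral_def)
qed

lemma shot_noise_real_distribution: "real_distribution (shot_noise lam B Sd t)"
proof -
  have "(\<lambda>(s, b, S). b * mean_work Sd s * Fbar_e Sd s (t - s)) \<in> borel_measurable mark_space"
    unfolding mark_space_def by (simp add: case_prod_beta' mult.assoc) measurable
  from measurable_sum_marks[OF this] show ?thesis
    using queue_sample_prob
    by (simp add: shot_noise_def real_distribution_def real_distribution_axioms_def prob_space.prob_space_distr)
qed

lemma scaled_workload_real_distribution:
  "real_distribution (distr (queue_sample lam B Sd t) borel (\<lambda>\<omega>. workload m t \<omega> / real m))"
proof -
  have "(\<lambda>\<omega>. workload m t \<omega> / real m) \<in> borel_measurable (queue_sample lam B Sd t)"
    unfolding workload_eq_sum_batch_sum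
    using measurable_sum_marks[OF batch_sum_measurable[OF remaining_work_measurable]] by measurable
  then show ?thesis
    using queue_sample_prob
    by (simp add: real_distribution_def real_distribution_axioms_def prob_space.prob_space_distr)
qed

lemma char_scaled_workload:
  "char (distr (queue_sample lam B Sd t) borel (\<lambda>\<omega>. workload m t \<omega> / real m)) \<theta>
    = (\<integral>\<omega>. exp (\<i> * of_real \<theta> * of_real (\<Sum>i<fst \<omega>. batch_sum remaining_work m (snd \<omega> i)) / of_nat m)
        \<partial>queue_sample lam B Sd t)"
proof -
  have "(\<lambda>\<omega>. workload m t \<omega> / real m) \<in> borel_measurable (queue_sample lam B Sd t)"
    unfolding workload_eq_sum_batch_sum
    using measurable_sum_marks[OF batch_sum_measurable[OF remaining_work_measurable]] by measurable
  then show ?thesis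
    unfolding char_def by (simp add: integral_distr workload_eq_sum_batch_sum mult.assoc)
qed

lemma char_shot_noise:
  "char (shot_noise lam B Sd t) \<theta> = exp (\<integral>s. limit_exponent remaining_work (\<i> * of_real \<theta>) s \<partial>lborel)"
proof -
  define h where "h = (\<lambda>(s, b, S::nat \<Rightarrow> real). b * mean_work Sd s * Fbar_e Sd s (t - s))"
  define g where "g x = exp (\<i> * complex_of_real (\<theta> * h x))" for x
  have h_meas: "h \<in> borel_measurable mark_space"
    unfolding h_def mark_space_def by (simp add: case_prod_beta' mult.assoc) measurable
  then have g_meas: "g \<in> borel_measurable mark_space"
    unfolding g_def by measurable
  have g_bound: "cmod (g x) \<le> 1" for x
    unfolding g_def by simp
  have "char (shot_noise lam B Sd t) \<theta> = (\<integral>\<omega>. iexp (\<theta> * (\<Sum>i<fst \<omega>. h (snd \<omega> i))) \<partial>queue_sample lam B Sd t)"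
    unfolding char_def shot_noise_def h_def
    using measurable_sum_marks[OF h_meas[unfolded h_def]] by (simp add: integral_distr)
  also have "\<dots> = (\<integral>\<omega>. (\<Prod>i<fst \<omega>. g (snd \<omega> i)) \<partial>queue_sample lam B Sd t)"
    by (simp add: g_def sum_distrib_left exp_sum)
  also have "\<dots> = exp (\<integral>s. limit_exponent remaining_work (\<i> * of_real \<theta>) s \<partial>lborel)"
    unfolding integral_prod_marks[OF g_meas g_bound]
  proof (intro arg_cong[where f=exp] Bochner_Integration.integral_cong refl)
    fix s
    show "of_real (indicator {0..t} s * lam s) * ((\<integral>x. g x \<partial>batch_marks s) - 1)
        = limit_exponent remaining_work (\<i> * of_real \<theta>) s"
    proof (cases "s \<in> {0..t}")
      case True
      interpret P: prob_space "PiM (UNIV::nat set) (\<lambda>_. Sd s)"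
        using Sd_prob by (intro prob_space_PiM) auto
      have "(\<integral>x. g x \<partial>batch_marks s) = (\<integral>b. exp (of_real b * (\<i> * of_real \<theta>
          * of_real (mean_work Sd s * Fbar_e Sd s (t - s)))) \<partial>B s)"
        unfolding integral_batch_marks[OF g_meas g_bound]
        by (intro Bochner_Integration.integral_cong refl) (simp add: g_def h_def P.prob_space algebra_simps)
      then show ?thesis
        using True by (simp add: limit_exponent_def integral_remaining_work)
    qed (simp add: limit_exponent_def)
  qed
  finally show ?thesis .
qed

theorem weak_conv_scaled_workload:
  "weak_conv_m (\<lambda>m. distr (queue_sample lam B Sd t) borel (\<lambda>\<omega>. workload m t \<omega> / real m))
     (shot_noise lam B Sd t)"
proof (rule levy_continuity[OF scaled_workload_real_distribution shot_noise_real_distribution])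
  fix \<theta> :: real
  show "(\<lambda>m. char (distr (queue_sample lam B Sd t) borel (\<lambda>\<omega>. workload m t \<omega> / real m)) \<theta>)
      \<longlonglongrightarrow> char (shot_noise lam B Sd t) \<theta>"
    unfolding char_scaled_workload char_shot_noise
    by (rule tendsto_integral_exp_sum_batch_sum[OF remaining_work_measurable _ _ remaining_work_integrable])
       (simp_all add: remaining_work_def)
qed

end

theorem theorem6:
  fixes lam :: "real \<Rightarrow> real"
    and B Sd :: "real \<Rightarrow> real measure"
    and t \<alpha> \<beta> \<gamma> :: real
  assumes lam_nonneg: "\<And>s. 0 \<le> s \<Longrightarrow> 0 \<le> lam s"
    and lam_meas: "lam \<in> borel_measurable borel"
    and lam_int: "\<And>u. 0 \<le> u \<Longrightarrow> set_integrable lborel {0..u} lam"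
    and B_kernel: "B \<in> borel \<rightarrow>\<^sub>M prob_algebra borel"
    and B_nonneg: "\<And>s. 0 \<le> s \<Longrightarrow> AE b in B s. 0 \<le> b"
    and Sd_kernel: "Sd \<in> borel \<rightarrow>\<^sub>M prob_algebra borel"
    and Sd_nonneg: "\<And>s. 0 \<le> s \<Longrightarrow> AE x in Sd s. 0 \<le> x"
    and Sd_mean: "\<And>s. 0 \<le> s \<Longrightarrow> integrable (Sd s) (\<lambda>x. x)"
    and t: "0 \<le> t"
    and abc: "0 \<le> \<alpha>" "0 \<le> \<beta>" "0 \<le> \<gamma>"
  shows
   "((\<lambda>m::nat. \<integral>\<omega>. exp (- \<alpha> * (workload m t \<omega> / real m) - \<beta> * (num_present m t \<omega> / real m)
                        - \<gamma> * (num_departed m t \<omega> / real m)) \<partial>queue_sample lam B Sd t)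
      \<longlongrightarrow> exp (- (LINT s:{0..t}|lborel.
            (\<integral>b. 1 - exp (- b * (\<alpha> * mean_work Sd s * Fbar_e Sd s (t - s)
                                 + \<beta> * Fbar Sd s (t - s) + \<gamma> * cdf (Sd s) (t - s))) \<partial>B s) * lam s)))
      sequentially
    \<and> ((\<lambda>m::nat. \<integral>\<omega>. exp (- \<alpha> * (workload m t \<omega> / real m)) \<partial>queue_sample lam B Sd t)
      \<longlongrightarrow> exp (- (LINT s:{0..t}|lborel.
            (\<integral>b. 1 - exp (- b * \<alpha> * mean_work Sd s * Fbar_e Sd s (t - s)) \<partial>B s) * lam s)))
      sequentially
    \<and> weak_conv_m (\<lambda>m. distr (queue_sample lam B Sd t) borel (\<lambda>\<omega>. workload m t \<omega> / real m))
        (shot_noise lam B Sd t)"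
proof -
  interpret batch_queue lam B Sd t
    using assms by unfold_locales
  show ?thesis
    using tendsto_laplace_transform_scaled_queue[OF abc]
      tendsto_laplace_transform_scaled_queue[OF abc(1) order_refl order_refl]
      weak_conv_scaled_workload
    by (simp add: mult.assoc)
qed

end
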